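(* Let $M$ and $M'$ be matroids on disjoint ground sets. If at least one of $M$, $M'$ has the Borsuk property, then $M\oplus M'$ has the Borsuk property.
   Context: $M\oplus M'$ is the direct sum: ground set the disjoint union, bases the unions $B\cup B'$ with $B$ a basis of $M$ and $B'$ a basis of $M'$. For a matroid $M$, $\mathcal{B}(M)$ denotes its set of bases, and the distance between two bases $B,B'$ is $|B\triangle B'|$; $\operatorname{diam}$ denotes diameter. The Borsuk number $f(M)$ is the minimum number of parts in a partition of $\mathcal{B}(M)$ in which every part has diameter strictly smaller than $\operatorname{diam}(\mathcal{B}(M))$; if $M$ has exactly one basis, $f(M):=+\infty$. If $M$ has $n$ elements and $c$ connected components, $M$ has the Borsuk property if $f(M)\le n-c+1$. *)

theory Defs
  imports Main "HOL-Library.Disjoint_Sets" "HOL-Library.Extended_Nat"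
begin

definition matroid :: "'a set \<Rightarrow> 'a set set \<Rightarrow> bool" where
  "matroid E Bs \<longleftrightarrow> finite E \<and> Bs \<noteq> {} \<and> (\<forall>B\<in>Bs. B \<subseteq> E) \<and>
     (\<forall>B1\<in>Bs. \<forall>B2\<in>Bs. \<forall>x\<in>B1 - B2. \<exists>y\<in>B2 - B1. insert y (B1 - {x}) \<in> Bs)"

definition indep :: "'a set set \<Rightarrow> 'a set \<Rightarrow> bool" where
  "indep Bs X \<longleftrightarrow> (\<exists>B\<in>Bs. X \<subseteq> B)"

definition circuit :: "'a set \<Rightarrow> 'a set set \<Rightarrow> 'a set \<Rightarrow> bool" where
  "circuit E Bs C \<longleftrightarrow> C \<subseteq> E \<and> \<not> indep Bs C \<and> (\<forall>D. D \<subset> C \<longrightarrow> indep Bs D)"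

definition conn_rel :: "'a set \<Rightarrow> 'a set set \<Rightarrow> ('a \<times> 'a) set" where
  "conn_rel E Bs = {(e, f). e \<in> E \<and> f \<in> E \<and> (e = f \<or> (\<exists>C. circuit E Bs C \<and> e \<in> C \<and> f \<in> C))}"

definition num_components :: "'a set \<Rightarrow> 'a set set \<Rightarrow> nat" where
  "num_components E Bs = card (E // conn_rel E Bs)"

definition direct_sum_bases :: "'a set set \<Rightarrow> 'a set set \<Rightarrow> 'a set set" where
  "direct_sum_bases Bs Bs' = {B \<union> B' | B B'. B \<in> Bs \<and> B' \<in> Bs'}"

definition diam :: "'a set set \<Rightarrow> nat" where
  "diam S = Max {card (B - B' \<union> (B' - B)) | B B'. B \<in> S \<and> B' \<in> S}"

definition borsuk_number :: "'a set set \<Rightarrow> enat" where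
  "borsuk_number Bs = (if card Bs = 1 then \<infinity> else
     enat (LEAST k. \<exists>P. partition_on Bs P \<and> card P = k \<and> (\<forall>S\<in>P. diam S < diam Bs)))"

definition borsuk_property :: "'a set \<Rightarrow> 'a set set \<Rightarrow> bool" where
  "borsuk_property E Bs \<longleftrightarrow>
     borsuk_number Bs \<le> enat (card E - num_components E Bs + 1)"

end

theory Submission
  imports Defs
begin

(* A partition of the bases of M into parts of smaller diameter lifts to M \<oplus> M' by
   attaching every basis of M' to each part: distances add up over disjoint ground sets, so
   diam (S \<oplus> B(M')) = diam S + diam B(M') and f(M \<oplus> M') \<le> f(M).  Every circuit of M \<oplus> M'
   lies in E or in E', so the components meeting E are exactly those of M and at most |E'|
   further ones arise; hence |E| - c(M) + 1 \<le> |E \<union> E'| - c(M \<oplus> M') + 1. *)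

lemma matroid_finite_bases: "matroid E Bs \<Longrightarrow> finite Bs"
  unfolding matroid_def by (meson Pow_iff finite_Pow_iff finite_subset subsetI)

lemma matroid_bases_Pow: "matroid E Bs \<Longrightarrow> Bs \<subseteq> Pow E"
  unfolding matroid_def by auto

lemma Un_eq_Un_disjoint_iff:
  assumes "E \<inter> E' = {}" "A \<subseteq> E" "A' \<subseteq> E" "C \<subseteq> E'" "C' \<subseteq> E'"
  shows "A \<union> C = A' \<union> C' \<longleftrightarrow> A = A' \<and> C = C'"
  using assms by blast

lemma card_symdiff_Un_disjoint:
  assumes "E \<inter> E' = {}" "finite E" "finite E'" "A \<subseteq> E" "A' \<subseteq> E" "C \<subseteq> E'" "C' \<subseteq> E'"
  shows "card (sym_diff (A \<union> C) (A' \<union> C')) = card (sym_diff A A') + card (sym_diff C C')"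
proof -
  have "sym_diff (A \<union> C) (A' \<union> C') = sym_diff A A' \<union> sym_diff C C'"
    and "sym_diff A A' \<inter> sym_diff C C' = {}"
    using assms(1,4-7) by blast+
  moreover have "finite (sym_diff A A')" "finite (sym_diff C C')"
    using assms(2-7) finite_subset by blast+
  ultimately show ?thesis by (simp add: card_Un_disjoint)
qed

lemma card_quotient_le:
  assumes "finite A"
  shows "card (A // r) \<le> card A"
proof -
  have "A // r = (\<lambda>x. r `` {x}) ` A"
    unfolding quotient_def by blast
  then show ?thesis
    using assms by (simp add: card_image_le)
qed

lemma direct_sum_bases_commute: "direct_sum_bases Bs Bs' = direct_sum_bases Bs' Bs"
  unfolding direct_sum_bases_def by (auto simp: Un_commute)

lemma direct_sum_bases_image: "direct_sum_bases Bs Bs' = (\<lambda>(B, B'). B \<union> B') ` (Bs \<times> Bs')"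
  unfolding direct_sum_bases_def by auto

lemma direct_sum_bases_Union: "direct_sum_bases (\<Union>P) Bs' = (\<Union>S\<in>P. direct_sum_bases S Bs')"
  unfolding direct_sum_bases_def by blast

lemma finite_direct_sum_bases: "finite Bs \<Longrightarrow> finite Bs' \<Longrightarrow> finite (direct_sum_bases Bs Bs')"
  unfolding direct_sum_bases_image by simp

lemma card_direct_sum_bases:
  assumes "E \<inter> E' = {}" "Bs \<subseteq> Pow E" "Bs' \<subseteq> Pow E'"
  shows "card (direct_sum_bases Bs Bs') = card Bs * card Bs'"
proof -
  have "inj_on (\<lambda>(B, B'). B \<union> B') (Bs \<times> Bs')"
  proof (rule inj_onI, clarify)
    fix A C A' C' assume "A \<union> C = A' \<union> C'" "A \<in> Bs" "C \<in> Bs'" "A' \<in> Bs" "C' \<in> Bs'"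
    moreover from this have "A \<subseteq> E" "A' \<subseteq> E" "C \<subseteq> E'" "C' \<subseteq> E'"
      using assms(2,3) by auto
    ultimately show "A = A' \<and> C = C'"
      using Un_eq_Un_disjoint_iff[OF assms(1)] by simp
  qed
  then show ?thesis
    unfolding direct_sum_bases_image by (simp add: card_image card_cartesian_product)
qed

lemma disjnt_direct_sum_bases:
  assumes "E \<inter> E' = {}" "S \<subseteq> Pow E" "T \<subseteq> Pow E" "Bs' \<subseteq> Pow E'" "disjnt S T"
  shows "disjnt (direct_sum_bases S Bs') (direct_sum_bases T Bs')"
proof -
  have "A \<union> C \<noteq> A' \<union> C'" if "A \<in> S" "A' \<in> T" "C \<in> Bs'" "C' \<in> Bs'" for A A' C C'
  proof
    assume "A \<union> C = A' \<union> C'"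
    then have "A = A'"
      using that assms(2-4) Un_eq_Un_disjoint_iff[OF assms(1), of A A' C C'] by blast
    then show False
      using that(1,2) assms(5) by (auto simp: disjnt_def)
  qed
  then show ?thesis
    unfolding disjnt_def direct_sum_bases_def by blast
qed

lemma diam_ge:
  assumes "finite S" "B \<in> S" "B' \<in> S"
  shows "card (sym_diff B B') \<le> diam S"
  unfolding diam_def by (rule Max_ge) (use assms in \<open>auto intro: finite_image_set2\<close>)

lemma diam_attained:
  assumes "finite S" "S \<noteq> {}"
  obtains B B' where "B \<in> S" "B' \<in> S" "diam S = card (sym_diff B B')"
proof -
  have "finite {card (sym_diff B B') | B B'. B \<in> S \<and> B' \<in> S}"
    by (rule finite_image_set2) (use assms(1) in simp_all)
  moreover have "{card (sym_diff B B') | B B'. B \<in> S \<and> B' \<in> S} \<noteq> {}"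
    using assms(2) by blast
  ultimately have "diam S \<in> {card (sym_diff B B') | B B'. B \<in> S \<and> B' \<in> S}"
    unfolding diam_def by (rule Max_in)
  then show thesis
    using that by blast
qed

lemma diam_singleton [simp]: "diam {B} = 0"
  unfolding diam_def by simp

lemma diam_pos:
  assumes "finite S" "B \<in> S" "B' \<in> S" "B \<noteq> B'" "finite B" "finite B'"
  shows "0 < diam S"
proof -
  have "0 < card (sym_diff B B')"
    using assms(4-6) by (auto simp: card_gt_0_iff)
  also have "\<dots> \<le> diam S"
    using assms(1-3) by (rule diam_ge)
  finally show ?thesis .
qed

lemma diam_direct_sum_bases:
  assumes disj: "E \<inter> E' = {}" and fin: "finite E" "finite E'"
    and S: "S \<subseteq> Pow E" "S \<noteq> {}" and T: "T \<subseteq> Pow E'" "T \<noteq> {}"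
  shows "diam (direct_sum_bases S T) = diam S + diam T"
proof -
  have finS: "finite S" and finT: "finite T"
    using fin S(1) T(1) finite_subset by blast+
  have sym_diff_sum: "card (sym_diff (A \<union> C) (A' \<union> C')) = card (sym_diff A A') + card (sym_diff C C')"
    if "A \<in> S" "A' \<in> S" "C \<in> T" "C' \<in> T" for A A' C C'
    by (rule card_symdiff_Un_disjoint[OF disj fin]) (use that S T in auto)
  show ?thesis
    unfolding diam_def[of "direct_sum_bases S T"]
  proof (rule Max_eqI)
    show "finite {card (sym_diff B B') | B B'. B \<in> direct_sum_bases S T \<and> B' \<in> direct_sum_bases S T}"
      by (rule finite_image_set2) (simp_all add: finite_direct_sum_bases finS finT)
  next
    fix y assume "y \<in> {card (sym_diff B B') | B B'. B \<in> direct_sum_bases S T \<and> B' \<in> direct_sum_bases S T}"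
    then obtain A A' C C' where AC: "A \<in> S" "A' \<in> S" "C \<in> T" "C' \<in> T"
      and "y = card (sym_diff (A \<union> C) (A' \<union> C'))"
      unfolding direct_sum_bases_def by blast
    then have "y = card (sym_diff A A') + card (sym_diff C C')"
      using sym_diff_sum by simp
    also have "\<dots> \<le> diam S + diam T"
      using AC by (intro add_mono diam_ge finS finT)
    finally show "y \<le> diam S + diam T" .
  next
    obtain A A' where A: "A \<in> S" "A' \<in> S" "diam S = card (sym_diff A A')"
      using diam_attained[OF finS S(2)] .
    obtain C C' where C: "C \<in> T" "C' \<in> T" "diam T = card (sym_diff C C')"
      using diam_attained[OF finT T(2)] .
    have "A \<union> C \<in> direct_sum_bases S T" "A' \<union> C' \<in> direct_sum_bases S T"
      unfolding direct_sum_bases_def using A C by blast+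
    moreover have "diam S + diam T = card (sym_diff (A \<union> C) (A' \<union> C'))"
      using A C sym_diff_sum by simp
    ultimately show "diam S + diam T
        \<in> {card (sym_diff B B') | B B'. B \<in> direct_sum_bases S T \<and> B' \<in> direct_sum_bases S T}"
      by blast
  qed
qed

lemma borsuk_number_le_card_partition:
  assumes "card Bs \<noteq> 1" "partition_on Bs P" "\<forall>S\<in>P. diam S < diam Bs"
  shows "borsuk_number Bs \<le> card P"
  unfolding borsuk_number_def using assms by (auto intro!: Least_le)

lemma obtain_borsuk_partition:
  assumes "finite Bs" "\<forall>B\<in>Bs. finite B" "Bs \<noteq> {}" "card Bs \<noteq> 1"
  obtains P where "partition_on Bs P" "borsuk_number Bs = card P" "\<forall>S\<in>P. diam S < diam Bs"
proof -
  obtain B B' where B: "B \<in> Bs" "B' \<in> Bs" "B \<noteq> B'"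
    using assms(3,4) by (metis is_singletonI' is_singleton_altdef)
  have "0 < diam Bs"
    using diam_pos[OF assms(1) B] assms(2) B by blast
  \<comment> \<open>the singletons show that the LEAST in borsuk_number is taken over a nonempty set\<close>
  then have "\<exists>k P. partition_on Bs P \<and> card P = k \<and> (\<forall>S\<in>P. diam S < diam Bs)"
    using partition_on_singletons[of Bs] by auto
  from LeastI_ex[OF this] obtain P where "partition_on Bs P"
    "card P = (LEAST k. \<exists>P. partition_on Bs P \<and> card P = k \<and> (\<forall>S\<in>P. diam S < diam Bs))"
    "\<forall>S\<in>P. diam S < diam Bs"
    by blast
  with that show thesis
    unfolding borsuk_number_def using assms(4) by simp
qed

lemma partition_on_direct_sum_bases:
  assumes disj: "E \<inter> E' = {}" and Pow: "Bs \<subseteq> Pow E" "Bs' \<subseteq> Pow E'" and P: "partition_on Bs P"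
  shows "partition_on (direct_sum_bases Bs Bs') ((\<lambda>S. direct_sum_bases S Bs') ` P - {{}})"
proof (rule partition_on_transform[OF P, where F = "\<lambda>S. direct_sum_bases S Bs'"])
  show "\<Union>((\<lambda>S. direct_sum_bases S Bs') ` P) = direct_sum_bases (\<Union>P) Bs'"
    by (rule direct_sum_bases_Union[symmetric])
next
  fix S T assume "S \<in> P" "T \<in> P" "disjnt S T"
  moreover have "\<Union>P \<subseteq> Pow E"
    using partition_onD1[OF P] Pow(1) by blast
  ultimately show "disjnt (direct_sum_bases S Bs') (direct_sum_bases T Bs')"
    using disjnt_direct_sum_bases[OF disj _ _ Pow(2)] by blast
qed

lemma borsuk_number_direct_sum_le:
  assumes M: "matroid E Bs" and M': "matroid E' Bs'" and disj: "E \<inter> E' = {}"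
  shows "borsuk_number (direct_sum_bases Bs Bs') \<le> borsuk_number Bs"
proof (cases "card Bs = 1")
  case True
  then show ?thesis by (simp add: borsuk_number_def)
next
  case False
  have finE: "finite E" "finite E'" and ne: "Bs \<noteq> {}" "Bs' \<noteq> {}"
    using M M' unfolding matroid_def by auto
  have Pow: "Bs \<subseteq> Pow E" "Bs' \<subseteq> Pow E'"
    using matroid_bases_Pow[OF M] matroid_bases_Pow[OF M'] .
  have "\<forall>B\<in>Bs. finite B"
    using Pow(1) finE(1) finite_subset by blast
  then obtain P where P: "partition_on Bs P" "borsuk_number Bs = card P" "\<forall>S\<in>P. diam S < diam Bs"
    using obtain_borsuk_partition matroid_finite_bases[OF M] ne(1) False by blast
  have parts: "S \<subseteq> Pow E" "S \<noteq> {}" if "S \<in> P" for S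
    using that partition_onD1[OF P(1)] partition_onD3[OF P(1)] Pow(1) by auto
  define Q where "Q = (\<lambda>S. direct_sum_bases S Bs') ` P - {{}}"
  have "partition_on (direct_sum_bases Bs Bs') Q"
    unfolding Q_def using partition_on_direct_sum_bases[OF disj Pow P(1)] .
  moreover have "\<forall>T\<in>Q. diam T < diam (direct_sum_bases Bs Bs')"
    using P(3) parts diam_direct_sum_bases[OF disj finE _ _ Pow(2) ne(2)]
      diam_direct_sum_bases[OF disj finE Pow(1) ne(1) Pow(2) ne(2)]
    unfolding Q_def by auto
  moreover have "card (direct_sum_bases Bs Bs') \<noteq> 1"
    using False card_direct_sum_bases[OF disj Pow] by simp
  ultimately have "borsuk_number (direct_sum_bases Bs Bs') \<le> card Q"
    using borsuk_number_le_card_partition by blast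
  also have "card Q \<le> card P"
    unfolding Q_def using finite_elements[OF matroid_finite_bases[OF M] P(1)]
    by (meson card_Diff1_le card_image_le finite_imageI order_trans)
  finally show ?thesis
    using P(2) by simp
qed

lemma indep_direct_sum_bases_iff:
  assumes "E \<inter> E' = {}" "Bs \<subseteq> Pow E" "Bs' \<subseteq> Pow E'" "X \<subseteq> E \<union> E'"
  shows "indep (direct_sum_bases Bs Bs') X \<longleftrightarrow> indep Bs (X \<inter> E) \<and> indep Bs' (X \<inter> E')"
proof
  assume "indep (direct_sum_bases Bs Bs') X"
  then obtain B B' where B: "B \<in> Bs" "B' \<in> Bs'" and X: "X \<subseteq> B \<union> B'"
    unfolding indep_def direct_sum_bases_def by blast
  have "B \<subseteq> E" "B' \<subseteq> E'"
    using B assms(2,3) by auto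
  then have "X \<inter> E \<subseteq> B" "X \<inter> E' \<subseteq> B'"
    using X assms(1) by auto
  with B show "indep Bs (X \<inter> E) \<and> indep Bs' (X \<inter> E')"
    unfolding indep_def by blast
next
  assume "indep Bs (X \<inter> E) \<and> indep Bs' (X \<inter> E')"
  then obtain B B' where B: "B \<in> Bs" "B' \<in> Bs'" and "X \<inter> E \<subseteq> B" "X \<inter> E' \<subseteq> B'"
    unfolding indep_def by blast
  then have "X \<subseteq> B \<union> B'"
    using assms(4) by auto
  moreover have "B \<union> B' \<in> direct_sum_bases Bs Bs'"
    unfolding direct_sum_bases_def using B by blast
  ultimately show "indep (direct_sum_bases Bs Bs') X"
    unfolding indep_def by blast
qed

lemma circuit_direct_sum_bases_iff:
  assumes disj: "E \<inter> E' = {}" and Pow: "Bs \<subseteq> Pow E" "Bs' \<subseteq> Pow E'" and ne: "Bs' \<noteq> {}"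
    and meets: "C \<inter> E \<noteq> {}"
  shows "circuit (E \<union> E') (direct_sum_bases Bs Bs') C \<longleftrightarrow> circuit E Bs C"
proof -
  note indep_iff = indep_direct_sum_bases_iff[OF disj Pow]
  have indep_E: "indep (direct_sum_bases Bs Bs') D \<longleftrightarrow> indep Bs D" if "D \<subseteq> E" for D
  proof -
    have "indep Bs' {}"
      using ne unfolding indep_def by blast
    moreover have "D \<inter> E = D" "D \<inter> E' = {}"
      using that disj by blast+
    ultimately show ?thesis
      using indep_iff[of D] that by (simp add: le_supI1)
  qed
  show ?thesis
  proof
    assume "circuit (E \<union> E') (direct_sum_bases Bs Bs') C"
    then have CE: "C \<subseteq> E \<union> E'" and dep: "\<not> indep (direct_sum_bases Bs Bs') C"
      and min: "\<And>D. D \<subset> C \<Longrightarrow> indep (direct_sum_bases Bs Bs') D"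
      unfolding circuit_def by auto
    have "C \<subseteq> E"
    proof (rule ccontr)
      assume "\<not> C \<subseteq> E"
      then have "C \<inter> E \<subset> C" "C \<inter> E' \<subset> C"
        using meets disj by blast+
      then have "indep Bs (C \<inter> E)" "indep Bs' (C \<inter> E')"
        using min indep_iff[of "C \<inter> E"] indep_iff[of "C \<inter> E'"] by (auto simp: Int_assoc)
      then have "indep (direct_sum_bases Bs Bs') C"
        using indep_iff[OF CE] by blast
      with dep show False ..
    qed
    moreover have "\<not> indep Bs C"
      using dep indep_E[OF \<open>C \<subseteq> E\<close>] by blast
    moreover have "indep Bs D" if "D \<subset> C" for D
      using min[OF that] indep_E that \<open>C \<subseteq> E\<close> by blast
    ultimately show "circuit E Bs C"
      unfolding circuit_def by blast
  next
    assume "circuit E Bs C"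
    then have "C \<subseteq> E" and dep: "\<not> indep Bs C" and min: "\<And>D. D \<subset> C \<Longrightarrow> indep Bs D"
      unfolding circuit_def by auto
    moreover have "\<not> indep (direct_sum_bases Bs Bs') C"
      using dep indep_E[OF \<open>C \<subseteq> E\<close>] by blast
    moreover have "indep (direct_sum_bases Bs Bs') D" if "D \<subset> C" for D
      using min[OF that] indep_E that \<open>C \<subseteq> E\<close> by blast
    ultimately show "circuit (E \<union> E') (direct_sum_bases Bs Bs') C"
      unfolding circuit_def by blast
  qed
qed

lemma conn_rel_direct_sum_bases_Image:
  assumes "E \<inter> E' = {}" "Bs \<subseteq> Pow E" "Bs' \<subseteq> Pow E'" "Bs' \<noteq> {}" "x \<in> E"
  shows "conn_rel (E \<union> E') (direct_sum_bases Bs Bs') `` {x} = conn_rel E Bs `` {x}"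
proof -
  have "circuit (E \<union> E') (direct_sum_bases Bs Bs') C \<longleftrightarrow> circuit E Bs C" if "x \<in> C" for C
    using circuit_direct_sum_bases_iff[OF assms(1-4)] that assms(5) by blast
  moreover have "C \<subseteq> E" if "circuit E Bs C" for C
    using that unfolding circuit_def by blast
  ultimately show ?thesis
    using assms(5) unfolding conn_rel_def by blast
qed

lemma num_components_direct_sum_le:
  assumes "E \<inter> E' = {}" "Bs \<subseteq> Pow E" "Bs' \<subseteq> Pow E'" "Bs' \<noteq> {}" "finite E'"
  shows "num_components (E \<union> E') (direct_sum_bases Bs Bs') \<le> num_components E Bs + card E'"
proof -
  let ?R = "conn_rel (E \<union> E') (direct_sum_bases Bs Bs')"
  have "E // ?R = E // conn_rel E Bs"
    unfolding quotient_def by (rule SUP_cong) (simp_all add: conn_rel_direct_sum_bases_Image[OF assms(1-4)])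
  then have "(E \<union> E') // ?R = E // conn_rel E Bs \<union> E' // ?R"
    unfolding quotient_def by blast
  then have "card ((E \<union> E') // ?R) \<le> card (E // conn_rel E Bs) + card (E' // ?R)"
    by (simp add: card_Un_le)
  also have "\<dots> \<le> card (E // conn_rel E Bs) + card E'"
    using card_quotient_le[OF assms(5)] by simp
  finally show ?thesis
    unfolding num_components_def .
qed

lemma borsuk_property_direct_sum:
  assumes M: "matroid E Bs" and M': "matroid E' Bs'" and disj: "E \<inter> E' = {}"
    and "borsuk_property E Bs"
  shows "borsuk_property (E \<union> E') (direct_sum_bases Bs Bs')"
proof -
  have finE: "finite E" "finite E'" and "Bs' \<noteq> {}"
    using M M' unfolding matroid_def by auto
  then have "num_components (E \<union> E') (direct_sum_bases Bs Bs') \<le> num_components E Bs + card E'"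
    using num_components_direct_sum_le disj matroid_bases_Pow[OF M] matroid_bases_Pow[OF M'] by blast
  \<comment> \<open>keeps the subtraction card E - num_components E Bs from truncating\<close>
  moreover have "num_components E Bs \<le> card E"
    unfolding num_components_def using finE(1) by (rule card_quotient_le)
  moreover have "card (E \<union> E') = card E + card E'"
    using finE disj by (rule card_Un_disjoint)
  ultimately have "card E - num_components E Bs + 1
      \<le> card (E \<union> E') - num_components (E \<union> E') (direct_sum_bases Bs Bs') + 1"
    by linarith
  then show ?thesis
    using assms(4) borsuk_number_direct_sum_le[OF M M' disj] unfolding borsuk_property_def
    by (meson enat_ord_simps(1) order_trans)
qed

theorem corollary4p3:
  assumes "matroid E Bs" and "matroid E' Bs'" and "E \<inter> E' = {}"
    and "borsuk_property E Bs \<or> borsuk_property E' Bs'"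
  shows "borsuk_property (E \<union> E') (direct_sum_bases Bs Bs')"
  using assms(4)
proof
  assume "borsuk_property E Bs"
  then show ?thesis
    using borsuk_property_direct_sum assms(1-3) by blast
next
  assume "borsuk_property E' Bs'"
  then have "borsuk_property (E' \<union> E) (direct_sum_bases Bs' Bs)"
    using borsuk_property_direct_sum assms(1-3) by (metis inf_commute)
  then show ?thesis
    by (simp add: Un_commute direct_sum_bases_commute)
qed

end
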